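(* Let $H$ be a Banach bialgebra and $A$ a left $H$-$\widehat\otimes$-module Arens–Michael algebra. Then the action of $H$ on $A$ is $m$-localizable, i.e., there is a defining family of continuous seminorms $\|\cdot\|$ on $A$ each of which is submultiplicative and $H$-stable.
   Context: Conventions: algebras are complex, associative, unital. $\widehat\otimes$ is the completed projective tensor product. A $\widehat\otimes$-algebra is a complete locally convex algebra with jointly continuous multiplication; a $\widehat\otimes$-bialgebra is a $\widehat\otimes$-algebra $H$ with continuous coassociative comultiplication $\Delta_H\colon H\to H\widehat\otimes H$ and counit $\varepsilon_H\colon H\to\mathbb C$ which are unital algebra homomorphisms; a Banach bialgebra is a $\widehat\otimes$-bialgebra whose underlying space is a Banach space. A left $H$-$\widehat\otimes$-module algebra is a $\widehat\otimes$-algebra $A$ with a continuous bilinear left action $H\times A\to A$ making $A$ a left $H$-module such that $h\cdot(ab)=\mu_A(\Delta_H(h)\cdot(a\otimes b))$ and $h\cdot1=\varepsilon_H(h)1$. An Arens–Michael algebra is a complete locally convex algebra whose topology is given by submultiplicative seminorms. A seminorm $\|\cdot\|$ on $A$ is $H$-stable if there is a continuous seminorm $p$ on $H$ with $\|h\cdot a\|\le p(h)\|a\|$ for all $h\in H$, $a\in A$. *)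

theory Defs
  imports "HOL-Analysis.Analysis"
begin

definition cvs :: "(complex \<Rightarrow> 'v::ab_group_add \<Rightarrow> 'v) \<Rightarrow> bool" where
  "cvs sm \<longleftrightarrow>
     (\<forall>c x y. sm c (x + y) = sm c x + sm c y) \<and>
     (\<forall>c d x. sm (c + d) x = sm c x + sm d x) \<and>
     (\<forall>c d x. sm (c * d) x = sm c (sm d x)) \<and>
     (\<forall>x. sm 1 x = x)"

definition calg :: "(complex \<Rightarrow> 'v::ring_1 \<Rightarrow> 'v) \<Rightarrow> bool" where
  "calg sm \<longleftrightarrow> cvs sm \<and>
     (\<forall>c x y. sm c (x * y) = sm c x * y) \<and>
     (\<forall>c x y. sm c (x * y) = x * sm c y)"

definition seminorm_on :: "(complex \<Rightarrow> 'v::ab_group_add \<Rightarrow> 'v) \<Rightarrow> ('v \<Rightarrow> real) \<Rightarrow> bool" where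
  "seminorm_on sm p \<longleftrightarrow>
     (\<forall>x y. p (x + y) \<le> p x + p y) \<and> (\<forall>c x. p (sm c x) = cmod c * p x)"

definition cont_sn :: "(complex \<Rightarrow> 'v::ab_group_add \<Rightarrow> 'v) \<Rightarrow> ('v \<Rightarrow> real) set \<Rightarrow> ('v \<Rightarrow> real) \<Rightarrow> bool" where
  "cont_sn sm P q \<longleftrightarrow> seminorm_on sm q \<and>
     (\<exists>F C. finite F \<and> F \<subseteq> P \<and> (\<forall>x. q x \<le> C * (\<Sum>p\<in>F. p x)))"

definition defining_family :: "(complex \<Rightarrow> 'v::ab_group_add \<Rightarrow> 'v) \<Rightarrow> ('v \<Rightarrow> real) set \<Rightarrow> ('v \<Rightarrow> real) set \<Rightarrow> bool" where
  "defining_family sm P Q \<longleftrightarrow> (\<forall>q\<in>Q. cont_sn sm P q) \<and> (\<forall>p\<in>P. cont_sn sm Q p)"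

definition lc_hausdorff :: "('v::ab_group_add \<Rightarrow> real) set \<Rightarrow> bool" where
  "lc_hausdorff P \<longleftrightarrow> (\<forall>x. x \<noteq> 0 \<longrightarrow> (\<exists>p\<in>P. p x > 0))"

definition lc_complete :: "('v::ab_group_add \<Rightarrow> real) set \<Rightarrow> bool" where
  "lc_complete P \<longleftrightarrow> (\<forall>F. F \<noteq> bot \<longrightarrow>
      (\<forall>p\<in>P. \<forall>e>0. \<forall>\<^sub>F (x, y) in F \<times>\<^sub>F F. p (x - y) < e) \<longrightarrow>
      (\<exists>s. \<forall>p\<in>P. \<forall>e>0. \<forall>\<^sub>F x in F. p (x - s) < e))"

definition lc_sums :: "('v::ab_group_add \<Rightarrow> real) set \<Rightarrow> (nat \<Rightarrow> 'v) \<Rightarrow> 'v \<Rightarrow> bool" where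
  "lc_sums P f s \<longleftrightarrow> (\<forall>p\<in>P. (\<lambda>n. p ((\<Sum>i<n. f i) - s)) \<longlonglongrightarrow> 0)"

definition cont_bilinear ::
  "(complex \<Rightarrow> 'v::ab_group_add \<Rightarrow> 'v) \<Rightarrow> ('v \<Rightarrow> real) set \<Rightarrow>
   (complex \<Rightarrow> 'w::ab_group_add \<Rightarrow> 'w) \<Rightarrow> ('w \<Rightarrow> real) set \<Rightarrow>
   (complex \<Rightarrow> 'u::ab_group_add \<Rightarrow> 'u) \<Rightarrow> ('u \<Rightarrow> real) set \<Rightarrow> ('v \<Rightarrow> 'w \<Rightarrow> 'u) \<Rightarrow> bool" where
  "cont_bilinear smV PV smW PW smU PU B \<longleftrightarrow>
     (\<forall>x x' y. B (x + x') y = B x y + B x' y) \<and>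
     (\<forall>x y y'. B x (y + y') = B x y + B x y') \<and>
     (\<forall>c x y. B (smV c x) y = smU c (B x y)) \<and>
     (\<forall>c x y. B x (smW c y) = smU c (B x y)) \<and>
     (\<forall>r\<in>PU. \<exists>p q. cont_sn smV PV p \<and> cont_sn smW PW q \<and> (\<forall>x y. r (B x y) \<le> p x * q y))"

definition am_algebra :: "(complex \<Rightarrow> 'a::ring_1 \<Rightarrow> 'a) \<Rightarrow> ('a \<Rightarrow> real) set \<Rightarrow> bool" where
  "am_algebra sm P \<longleftrightarrow> calg sm \<and> (\<forall>p\<in>P. seminorm_on sm p) \<and> lc_hausdorff P \<and> lc_complete P \<and>
     cont_bilinear sm P sm P sm P (*) \<and>
     (\<exists>Q. defining_family sm P Q \<and> (\<forall>q\<in>Q. \<forall>a b. q (a * b) \<le> q a * q b))"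

definition banach_algebra :: "(complex \<Rightarrow> 'h::ring_1 \<Rightarrow> 'h) \<Rightarrow> ('h \<Rightarrow> real) \<Rightarrow> bool" where
  "banach_algebra sm n \<longleftrightarrow> calg sm \<and> seminorm_on sm n \<and> (\<forall>x. n x = 0 \<longrightarrow> x = 0) \<and>
     lc_complete {n} \<and> (\<exists>C. \<forall>x y. n (x * y) \<le> C * n x * n y)"

definition bounded_bilinear_form :: "(complex \<Rightarrow> 'h::ab_group_add \<Rightarrow> 'h) \<Rightarrow> ('h \<Rightarrow> real) \<Rightarrow> ('h \<Rightarrow> 'h \<Rightarrow> complex) \<Rightarrow> bool" where
  "bounded_bilinear_form sm n \<phi> \<longleftrightarrow>
     (\<forall>x x' y. \<phi> (x + x') y = \<phi> x y + \<phi> x' y) \<and>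
     (\<forall>x y y'. \<phi> x (y + y') = \<phi> x y + \<phi> x y') \<and>
     (\<forall>c x y. \<phi> (sm c x) y = c * \<phi> x y) \<and>
     (\<forall>c x y. \<phi> x (sm c y) = c * \<phi> x y) \<and>
     (\<exists>K. \<forall>x y. cmod (\<phi> x y) \<le> K * n x * n y)"

definition bounded_trilinear_form :: "(complex \<Rightarrow> 'h::ab_group_add \<Rightarrow> 'h) \<Rightarrow> ('h \<Rightarrow> real) \<Rightarrow> ('h \<Rightarrow> 'h \<Rightarrow> 'h \<Rightarrow> complex) \<Rightarrow> bool" where
  "bounded_trilinear_form sm n \<psi> \<longleftrightarrow>
     (\<forall>x x' y z. \<psi> (x + x') y z = \<psi> x y z + \<psi> x' y z) \<and>
     (\<forall>x y y' z. \<psi> x (y + y') z = \<psi> x y z + \<psi> x y' z) \<and>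
     (\<forall>x y z z'. \<psi> x y (z + z') = \<psi> x y z + \<psi> x y z') \<and>
     (\<forall>c x y z. \<psi> (sm c x) y z = c * \<psi> x y z) \<and>
     (\<forall>c x y z. \<psi> x (sm c y) z = c * \<psi> x y z) \<and>
     (\<forall>c x y z. \<psi> x y (sm c z) = c * \<psi> x y z) \<and>
     (\<exists>K. \<forall>x y z. cmod (\<psi> x y z) \<le> K * n x * n y * n z)"

text \<open>An element of the completed projective tensor product of a Banach space with itself
  is represented (Grothendieck) by a series  \<Sum> x_n \<otimes> y_n  with \<Sum> \<parallel>x_n\<parallel>\<parallel>y_n\<parallel> < \<infinity>.\<close>
definition ptensor_rep :: "('h \<Rightarrow> real) \<Rightarrow> (nat \<Rightarrow> 'h \<times> 'h) \<Rightarrow> bool" where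
  "ptensor_rep n r \<longleftrightarrow> summable (\<lambda>i. n (fst (r i)) * n (snd (r i)))"

text \<open>Pairing of a bounded bilinear form (= element of the dual of H \<otimes>^ H) with a represented tensor.\<close>
definition tpair :: "('h \<Rightarrow> 'h \<Rightarrow> complex) \<Rightarrow> (nat \<Rightarrow> 'h \<times> 'h) \<Rightarrow> complex" where
  "tpair \<phi> r = (\<Sum>i. \<phi> (fst (r i)) (snd (r i)))"

text \<open>Two representations define the same element of H \<otimes>^ H (dual pairing separates points).\<close>
definition teq :: "(complex \<Rightarrow> 'h::ab_group_add \<Rightarrow> 'h) \<Rightarrow> ('h \<Rightarrow> real) \<Rightarrow> (nat \<Rightarrow> 'h \<times> 'h) \<Rightarrow> (nat \<Rightarrow> 'h \<times> 'h) \<Rightarrow> bool" where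
  "teq sm n r s \<longleftrightarrow> (\<forall>\<phi>. bounded_bilinear_form sm n \<phi> \<longrightarrow> tpair \<phi> r = tpair \<phi> s)"

text \<open>The comultiplication \<Delta> : H \<rightarrow> H \<otimes>^ H is given by choosing, for each h, a representing
  series \<Delta> h.  All identities are stated on elements of H \<otimes>^ H resp. H \<otimes>^ H \<otimes>^ H, i.e.
  tested against bounded bi-/trilinear forms (which form the duals), hence are independent
  of the chosen representatives.\<close>
definition banach_bialgebra ::
  "(complex \<Rightarrow> 'h::ring_1 \<Rightarrow> 'h) \<Rightarrow> ('h \<Rightarrow> real) \<Rightarrow> ('h \<Rightarrow> nat \<Rightarrow> 'h \<times> 'h) \<Rightarrow> ('h \<Rightarrow> complex) \<Rightarrow> bool" where
  "banach_bialgebra sm n \<Delta> \<epsilon> \<longleftrightarrow> banach_algebra sm n \<and>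
     \<comment> \<open>\<Delta> takes values in H \<otimes>^ H, is linear and continuous\<close>
     (\<forall>h. ptensor_rep n (\<Delta> h)) \<and>
     (\<forall>\<phi>. bounded_bilinear_form sm n \<phi> \<longrightarrow> (\<forall>a b h k.
        tpair \<phi> (\<Delta> (sm a h + sm b k)) = a * tpair \<phi> (\<Delta> h) + b * tpair \<phi> (\<Delta> k))) \<and>
     (\<exists>C. \<forall>h. \<exists>r. ptensor_rep n r \<and> teq sm n r (\<Delta> h) \<and>
        (\<Sum>i. n (fst (r i)) * n (snd (r i))) \<le> C * n h) \<and>
     \<comment> \<open>\<Delta> is a unital algebra homomorphism\<close>
     (\<forall>\<phi>. bounded_bilinear_form sm n \<phi> \<longrightarrow>
        tpair \<phi> (\<Delta> 1) = \<phi> 1 1 \<and>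
        (\<forall>h k. tpair \<phi> (\<Delta> (h * k)) =
           (\<Sum>i. tpair (\<lambda>a b. \<phi> (fst (\<Delta> h i) * a) (snd (\<Delta> h i) * b)) (\<Delta> k)))) \<and>
     \<comment> \<open>coassociativity  (\<Delta> \<otimes> 1)\<Delta> = (1 \<otimes> \<Delta>)\<Delta>\<close>
     (\<forall>\<psi>. bounded_trilinear_form sm n \<psi> \<longrightarrow> (\<forall>h.
        (\<Sum>i. tpair (\<lambda>a b. \<psi> a b (snd (\<Delta> h i))) (\<Delta> (fst (\<Delta> h i)))) =
        (\<Sum>i. tpair (\<lambda>b c. \<psi> (fst (\<Delta> h i)) b c) (\<Delta> (snd (\<Delta> h i)))))) \<and>
     \<comment> \<open>\<epsilon> is a continuous unital algebra homomorphism\<close>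
     (\<forall>a b h k. \<epsilon> (sm a h + sm b k) = a * \<epsilon> h + b * \<epsilon> k) \<and>
     (\<exists>C. \<forall>h. cmod (\<epsilon> h) \<le> C * n h) \<and>
     \<epsilon> 1 = 1 \<and> (\<forall>h k. \<epsilon> (h * k) = \<epsilon> h * \<epsilon> k) \<and>
     \<comment> \<open>counit laws  (\<epsilon> \<otimes> 1)\<Delta> = id = (1 \<otimes> \<epsilon>)\<Delta>\<close>
     (\<forall>h. lc_sums {n} (\<lambda>i. sm (\<epsilon> (fst (\<Delta> h i))) (snd (\<Delta> h i))) h) \<and>
     (\<forall>h. lc_sums {n} (\<lambda>i. sm (\<epsilon> (snd (\<Delta> h i))) (fst (\<Delta> h i))) h)"

definition module_algebra ::
  "(complex \<Rightarrow> 'h::ring_1 \<Rightarrow> 'h) \<Rightarrow> ('h \<Rightarrow> real) \<Rightarrow> ('h \<Rightarrow> nat \<Rightarrow> 'h \<times> 'h) \<Rightarrow> ('h \<Rightarrow> complex) \<Rightarrow>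
   (complex \<Rightarrow> 'a::ring_1 \<Rightarrow> 'a) \<Rightarrow> ('a \<Rightarrow> real) set \<Rightarrow> ('h \<Rightarrow> 'a \<Rightarrow> 'a) \<Rightarrow> bool" where
  "module_algebra smH n \<Delta> \<epsilon> smA P act \<longleftrightarrow>
     cont_bilinear smH {n} smA P smA P act \<and>
     (\<forall>h k a. act (h * k) a = act h (act k a)) \<and> (\<forall>a. act 1 a = a) \<and>
     (\<forall>h a b. lc_sums P (\<lambda>i. act (fst (\<Delta> h i)) a * act (snd (\<Delta> h i)) b) (act h (a * b))) \<and>
     (\<forall>h. act h 1 = smA (\<epsilon> h) 1)"

end

theory Submission
  imports Defs
begin

text \<open>
  For a continuous submultiplicative seminorm \<open>q\<close> on \<open>A\<close> put
  \<open>\<parallel>a\<parallel> = C \<cdot> sup {q (k \<cdot> a) / \<parallel>k\<parallel> | k \<noteq> 0}\<close>, where \<open>C \<ge> 1\<close> bounds the comultiplication.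
  Joint continuity of the action makes \<open>\<parallel>-\<parallel>\<close> continuous, \<open>k = 1\<close> shows that it dominates \<open>q\<close>,
  and \<open>\<parallel>k h\<parallel> \<le> M \<parallel>k\<parallel> \<parallel>h\<parallel>\<close> in \<open>H\<close> makes it \<open>H\<close>-stable. It is submultiplicative because
  \<open>k \<cdot> (ab) = \<Sum> (x\<^sub>i \<cdot> a) (y\<^sub>i \<cdot> b)\<close> for \<open>\<Delta> k = \<Sum> x\<^sub>i \<otimes> y\<^sub>i\<close> gives
  \<open>q (k \<cdot> (ab)) \<le> \<parallel>a\<parallel> \<parallel>b\<parallel> \<Sum> \<parallel>x\<^sub>i\<parallel> \<parallel>y\<^sub>i\<parallel> / C\<^sup>2\<close>, and the representation of \<open>\<Delta> k\<close> may
  be chosen with \<open>\<Sum> \<parallel>x\<^sub>i\<parallel> \<parallel>y\<^sub>i\<parallel> \<le> C \<parallel>k\<parallel>\<close>. Since \<open>\<Delta> k\<close> is only determined through its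
  pairings with bounded bilinear forms, the estimate is carried out after applying a norming
  functional at \<open>k \<cdot> (ab)\<close> (Hahn--Banach). Doing this for every member of a submultiplicative
  defining family of \<open>A\<close> yields the required family.
\<close>

locale cvs_space =
  fixes sm :: "complex \<Rightarrow> 'v::ab_group_add \<Rightarrow> 'v"
  assumes cvs: "cvs sm"
begin

lemma scale_add_right: "sm c (x + y) = sm c x + sm c y"
  using cvs unfolding cvs_def by blast

lemma scale_add_left: "sm (c + d) x = sm c x + sm d x"
  using cvs unfolding cvs_def by blast

lemma scale_scale: "sm c (sm d x) = sm (c * d) x"
  using cvs unfolding cvs_def by metis

lemma scale_one [simp]: "sm 1 x = x"
  using cvs unfolding cvs_def by blast

lemma scale_zero_left [simp]: "sm 0 x = 0"
  using scale_add_left[of 0 0 x] by simp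

lemma scale_zero_right [simp]: "sm c 0 = 0"
  using scale_add_right[of c 0 0] by simp

lemma scale_minus_right: "sm c (- x) = - sm c x"
  using scale_add_right[of c x "- x"] by (simp add: eq_neg_iff_add_eq_0 add.commute)

lemma scale_diff_right: "sm c (x - y) = sm c x - sm c y"
  using scale_add_right[of c x "- y"] by (simp add: scale_minus_right)

lemma scale_minus_left: "sm (- c) x = - sm c x"
  using scale_add_left[of c "- c" x] by (simp add: eq_neg_iff_add_eq_0 add.commute)

lemma scale_minus_one [simp]: "sm (- 1) x = - x"
  by (simp add: scale_minus_left)

lemma scale_diff_left: "sm (c - d) x = sm c x - sm d x"
  using scale_add_left[of c "- d" x] by (simp add: scale_minus_left)

lemma seminorm_triangle: "seminorm_on sm p \<Longrightarrow> p (x + y) \<le> p x + p y"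
  unfolding seminorm_on_def by blast

lemma seminorm_scale: "seminorm_on sm p \<Longrightarrow> p (sm c x) = cmod c * p x"
  unfolding seminorm_on_def by blast

lemma seminorm_zero: "seminorm_on sm p \<Longrightarrow> p 0 = 0"
  using seminorm_scale[of p 0 0] by simp

lemma seminorm_minus: "seminorm_on sm p \<Longrightarrow> p (- x) = p x"
  using seminorm_scale[of p "- 1" x] by simp

lemma seminorm_nonneg: "seminorm_on sm p \<Longrightarrow> 0 \<le> p x"
  using seminorm_triangle[of p x "- x"] by (simp add: seminorm_zero seminorm_minus)

lemma seminorm_cmult: "seminorm_on sm p \<Longrightarrow> 0 \<le> C \<Longrightarrow> seminorm_on sm (\<lambda>x. C * p x)"
  unfolding seminorm_on_def by (simp add: distrib_left[symmetric] mult_left_mono)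

lemma seminorm_add: "seminorm_on sm p \<Longrightarrow> seminorm_on sm q \<Longrightarrow> seminorm_on sm (\<lambda>x. p x + q x)"
  unfolding seminorm_on_def by (smt (verit) distrib_left)

subsection \<open>The Hahn--Banach theorem for seminorms\<close>

text \<open>Partial real-linear functionals dominated by \<open>q\<close> are handled through their graphs,
  so that Zorn's lemma applies to sets.\<close>

definition dominated_graph :: "('v \<Rightarrow> real) \<Rightarrow> ('v \<times> real) set \<Rightarrow> bool" where
  "dominated_graph q G \<longleftrightarrow>
     (\<forall>x y z. (x, y) \<in> G \<longrightarrow> (x, z) \<in> G \<longrightarrow> y = z) \<and>
     (\<forall>x y x' y'. (x, y) \<in> G \<longrightarrow> (x', y') \<in> G \<longrightarrow> (x + x', y + y') \<in> G) \<and>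
     (\<forall>x y t. (x, y) \<in> G \<longrightarrow> (sm (of_real t) x, t * y) \<in> G) \<and>
     (\<forall>x y. (x, y) \<in> G \<longrightarrow> y \<le> q x)"

definition graph_extend :: "('v \<times> real) set \<Rightarrow> 'v \<Rightarrow> real \<Rightarrow> ('v \<times> real) set" where
  "graph_extend G x0 c = {(x + sm (of_real t) x0, y + t * c) | x y t. (x, y) \<in> G}"

context
  fixes q :: "'v \<Rightarrow> real"
  assumes q: "seminorm_on sm q"
begin

lemma dominated_graph_zero: "dominated_graph q {(0, 0)}"
  unfolding dominated_graph_def by (simp add: seminorm_zero[OF q])

lemma dominated_graph_zero_mem: "dominated_graph q G \<Longrightarrow> (x, y) \<in> G \<Longrightarrow> (0, 0) \<in> G"
  unfolding dominated_graph_def by (metis mult_zero_left of_real_0 scale_zero_left)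

lemma dominated_graph_diff:
  assumes G: "dominated_graph q G" and "(x, y) \<in> G" "(x', y') \<in> G"
  shows "(x - x', y - y') \<in> G"
proof -
  have "(sm (of_real (- 1)) x', (- 1) * y') \<in> G"
    using G assms(3) unfolding dominated_graph_def by blast
  then have "(- x', - y') \<in> G" by simp
  then show ?thesis
    using G assms(2) unfolding dominated_graph_def by (metis diff_conv_add_uminus)
qed

text \<open>The value \<open>c\<close> at a new vector \<open>x0\<close> has to lie between \<open>y - q (x - x0)\<close> and
  \<open>q (z + x0) - w\<close> for all \<open>(x, y), (z, w)\<close> in the graph; such a \<open>c\<close> exists since
  \<open>y + w \<le> q (x + z) \<le> q (x - x0) + q (z + x0)\<close>.\<close>

lemma dominated_graph_extension_value:
  assumes G: "dominated_graph q G" and "G \<noteq> {}"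
  obtains c where "\<And>x y. (x, y) \<in> G \<Longrightarrow> y - q (x - x0) \<le> c"
    and "\<And>z w. (z, w) \<in> G \<Longrightarrow> c \<le> q (z + x0) - w"
proof -
  define S where "S = {y - q (x - x0) | x y. (x, y) \<in> G}"
  have below: "s \<le> q (z + x0) - w" if "s \<in> S" "(z, w) \<in> G" for s z w
  proof -
    obtain x y where xy: "(x, y) \<in> G" "s = y - q (x - x0)"
      using \<open>s \<in> S\<close> unfolding S_def by blast
    have "y + w \<le> q (x + z)"
      using G xy(1) that(2) unfolding dominated_graph_def by blast
    also have "\<dots> \<le> q (x - x0) + q (z + x0)"
      using seminorm_triangle[OF q, of "x - x0" "z + x0"] by simp
    finally show ?thesis using xy(2) by simp
  qed
  obtain z w where zw: "(z, w) \<in> G"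
    using \<open>G \<noteq> {}\<close> by auto
  then have "S \<noteq> {}"
    unfolding S_def by blast
  have "bdd_above S"
    using below zw unfolding bdd_above_def by blast
  show ?thesis
  proof (rule that)
    show "y - q (x - x0) \<le> Sup S" if "(x, y) \<in> G" for x y
      using \<open>bdd_above S\<close> that unfolding S_def by (blast intro: cSup_upper)
    show "Sup S \<le> q (z + x0) - w" if "(z, w) \<in> G" for z w
      using \<open>S \<noteq> {}\<close> below that by (blast intro: cSup_least)
  qed
qed

lemma graph_extend_functional:
  assumes G: "dominated_graph q G" and x0: "x0 \<notin> fst ` G"
    and "(z, y1) \<in> graph_extend G x0 c" "(z, y2) \<in> graph_extend G x0 c"
  shows "y1 = y2"
proof -
  obtain x y t where a: "(x, y) \<in> G" "z = x + sm (of_real t) x0" "y1 = y + t * c"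
    using assms(3) unfolding graph_extend_def by blast
  obtain x' y' t' where b: "(x', y') \<in> G" "z = x' + sm (of_real t') x0" "y2 = y' + t' * c"
    using assms(4) unfolding graph_extend_def by blast
  show ?thesis
  proof (cases "t = t'")
    case True
    then show ?thesis using a b G unfolding dominated_graph_def by auto
  next
    case False
    have "x - x' = sm (of_real (t' - t)) x0"
      using a(2) b(2) by (simp add: scale_diff_left algebra_simps)
    then have "sm (of_real (1 / (t' - t))) (x - x') = x0"
      using False by (simp add: scale_scale)
    moreover have "(sm (of_real (1 / (t' - t))) (x - x'), (1 / (t' - t)) * (y - y')) \<in> G"
      using G dominated_graph_diff[OF G a(1) b(1)] unfolding dominated_graph_def by blast
    ultimately show ?thesis using x0 by force
  qed
qed

lemma graph_extend_le:
  assumes G: "dominated_graph q G"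
    and c1: "\<And>x y. (x, y) \<in> G \<Longrightarrow> y - q (x - x0) \<le> c"
    and c2: "\<And>z w. (z, w) \<in> G \<Longrightarrow> c \<le> q (z + x0) - w"
    and "(x, y) \<in> G"
  shows "y + t * c \<le> q (x + sm (of_real t) x0)"
proof (cases t "0::real" rule: linorder_cases)
  case equal
  then show ?thesis using G assms(4) unfolding dominated_graph_def by simp
next
  case greater
  have "(sm (of_real (1 / t)) x, (1 / t) * y) \<in> G"
    using G assms(4) unfolding dominated_graph_def by blast
  from c2[OF this] have "y + t * c \<le> t * q (sm (of_real (1 / t)) x + x0)"
    using greater by (simp add: field_simps)
  also have "\<dots> = q (sm (of_real t) (sm (of_real (1 / t)) x + x0))"
    using seminorm_scale[OF q, of "of_real t"] greater by simp
  also have "sm (of_real t) (sm (of_real (1 / t)) x + x0) = x + sm (of_real t) x0"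
    using greater by (simp add: scale_add_right scale_scale)
  finally show ?thesis .
next
  case less
  have "(sm (of_real (- 1 / t)) x, (- 1 / t) * y) \<in> G"
    using G assms(4) unfolding dominated_graph_def by blast
  from c1[OF this] have "y + t * c \<le> - t * q (sm (of_real (- 1 / t)) x - x0)"
    using less by (simp add: field_simps)
  also have "\<dots> = q (sm (of_real (- t)) (sm (of_real (- 1 / t)) x - x0))"
    using seminorm_scale[OF q, of "of_real (- t)"] less by simp
  also have "sm (of_real (- t)) (sm (of_real (- 1 / t)) x - x0) = x + sm (of_real t) x0"
    using less by (simp add: scale_diff_right scale_scale scale_minus_left scale_minus_right)
  finally show ?thesis .
qed

lemma dominated_graph_graph_extend:
  assumes G: "dominated_graph q G" and x0: "x0 \<notin> fst ` G"
    and c1: "\<And>x y. (x, y) \<in> G \<Longrightarrow> y - q (x - x0) \<le> c"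
    and c2: "\<And>z w. (z, w) \<in> G \<Longrightarrow> c \<le> q (z + x0) - w"
  shows "dominated_graph q (graph_extend G x0 c)"
  unfolding dominated_graph_def
proof (intro conjI allI impI)
  let ?G' = "graph_extend G x0 c"
  show "y = z" if "(x, y) \<in> ?G'" "(x, z) \<in> ?G'" for x y z
    using graph_extend_functional[OF G x0 that] .
  show "(x1 + x2, y1 + y2) \<in> ?G'" if "(x1, y1) \<in> ?G'" "(x2, y2) \<in> ?G'" for x1 y1 x2 y2
  proof -
    from that obtain x y t x' y' t' where
      "(x, y) \<in> G" "x1 = x + sm (of_real t) x0" "y1 = y + t * c"
      "(x', y') \<in> G" "x2 = x' + sm (of_real t') x0" "y2 = y' + t' * c"
      unfolding graph_extend_def by blast
    moreover have "(x + x', y + y') \<in> G"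
      using G \<open>(x, y) \<in> G\<close> \<open>(x', y') \<in> G\<close> unfolding dominated_graph_def by blast
    moreover have "x1 + x2 = (x + x') + sm (of_real (t + t')) x0"
      using \<open>x1 = _\<close> \<open>x2 = _\<close> by (simp add: scale_add_left algebra_simps)
    moreover have "y1 + y2 = (y + y') + (t + t') * c"
      using \<open>y1 = _\<close> \<open>y2 = _\<close> by (simp add: algebra_simps)
    ultimately show ?thesis
      unfolding graph_extend_def by blast
  qed
  show "(sm (of_real s) x1, s * y1) \<in> ?G'" if "(x1, y1) \<in> ?G'" for x1 y1 s
  proof -
    from that obtain x y t where "(x, y) \<in> G" "x1 = x + sm (of_real t) x0" "y1 = y + t * c"
      unfolding graph_extend_def by blast
    moreover have "(sm (of_real s) x, s * y) \<in> G"
      using G \<open>(x, y) \<in> G\<close> unfolding dominated_graph_def by blast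
    moreover have "sm (of_real s) x1 = sm (of_real s) x + sm (of_real (s * t)) x0"
      using \<open>x1 = _\<close> by (simp add: scale_add_right scale_scale)
    moreover have "s * y1 = s * y + (s * t) * c"
      using \<open>y1 = _\<close> by (simp add: algebra_simps)
    ultimately show ?thesis
      unfolding graph_extend_def by blast
  qed
  show "y1 \<le> q x1" if "(x1, y1) \<in> ?G'" for x1 y1
    using that graph_extend_le[OF G c1 c2] unfolding graph_extend_def by blast
qed

lemma graph_extend_mem:
  assumes "(0, 0) \<in> G"
  shows "G \<subseteq> graph_extend G x0 c" and "(x0, c) \<in> graph_extend G x0 c"
  using assms unfolding graph_extend_def by (force intro: exI[of _ "0::real"] exI[of _ "1::real"])+

lemma dominated_graph_extend:
  assumes G: "dominated_graph q G" "G \<noteq> {}" and x0: "x0 \<notin> fst ` G"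
  obtains G' where "dominated_graph q G'" "G \<subset> G'"
proof -
  obtain c where "\<And>x y. (x, y) \<in> G \<Longrightarrow> y - q (x - x0) \<le> c"
    and "\<And>z w. (z, w) \<in> G \<Longrightarrow> c \<le> q (z + x0) - w"
    using dominated_graph_extension_value[OF G] by blast
  then have "dominated_graph q (graph_extend G x0 c)"
    by (rule dominated_graph_graph_extend[OF G(1) x0])
  moreover have "(0, 0) \<in> G"
    using G dominated_graph_zero_mem by fast
  then have "G \<subset> graph_extend G x0 c"
    using graph_extend_mem x0 by (metis fst_conv image_eqI psubsetI)
  ultimately show ?thesis by (rule that)
qed

lemma dominated_graph_through:
  obtains G where "dominated_graph q G" "(v, q v) \<in> G"
proof (cases "v = 0")
  case True
  then show ?thesis
    using dominated_graph_zero seminorm_zero[OF q] by (intro that) auto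
next
  case False
  have "dominated_graph q (graph_extend {(0, 0)} v (q v))"
    using False seminorm_minus[OF q, of v] seminorm_nonneg[OF q, of v]
    by (intro dominated_graph_graph_extend dominated_graph_zero) auto
  moreover have "(v, q v) \<in> graph_extend {(0, 0)} v (q v)"
    by (rule graph_extend_mem) simp
  ultimately show ?thesis by (rule that)
qed

lemma dominated_graph_Union_chain:
  assumes "C \<in> chains {G. dominated_graph q G}"
  shows "dominated_graph q (\<Union>C)"
proof -
  have dom: "\<And>G. G \<in> C \<Longrightarrow> dominated_graph q G"
    using assms unfolding chains_def by blast
  have two: "\<exists>G\<in>C. a \<in> G \<and> b \<in> G" if "a \<in> \<Union>C" "b \<in> \<Union>C" for a b
    using that assms unfolding chains_def chain_subset_def by blast
  show ?thesis
    unfolding dominated_graph_def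
  proof (intro conjI allI impI)
    show "y = z" if "(x, y) \<in> \<Union>C" "(x, z) \<in> \<Union>C" for x y z
      using two[OF that] dom unfolding dominated_graph_def by blast
    show "(x + x', y + y') \<in> \<Union>C" if "(x, y) \<in> \<Union>C" "(x', y') \<in> \<Union>C" for x y x' y'
      using two[OF that] dom unfolding dominated_graph_def by blast
  qed (use dom in \<open>unfold dominated_graph_def, blast+\<close>)
qed

lemma real_dominated_functional:
  obtains g where "\<And>x y. g (x + y) = g x + g y" "\<And>t x. g (sm (of_real t) x) = t * g x"
    "\<And>x. g x \<le> q x" "g v = q v"
proof -
  let ?D = "{G. dominated_graph q G \<and> (v, q v) \<in> G}"
  have "\<exists>U\<in>?D. \<forall>G\<in>C. G \<subseteq> U" if "C \<in> chains ?D" for C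
  proof (cases "C = {}")
    case True
    then show ?thesis using dominated_graph_through by blast
  next
    case False
    have "C \<in> chains {G. dominated_graph q G}"
      using that unfolding chains_def by blast
    then have "\<Union>C \<in> ?D"
      using False that dominated_graph_Union_chain unfolding chains_def by blast
    then show ?thesis by blast
  qed
  from Zorn_Lemma2[OF ballI[OF this]] obtain M where M: "dominated_graph q M" "(v, q v) \<in> M"
    and max: "\<And>G. dominated_graph q G \<Longrightarrow> (v, q v) \<in> G \<Longrightarrow> M \<subseteq> G \<Longrightarrow> G = M"
    by blast
  have total: "x \<in> fst ` M" for x
  proof (rule ccontr)
    assume "x \<notin> fst ` M"
    then obtain G where "dominated_graph q G" "M \<subset> G"
      using dominated_graph_extend[OF M(1)] M(2) by blast
    then show False using max M(2) by blast
  qed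
  define g where "g x = (THE y. (x, y) \<in> M)" for x
  have graph: "(x, y) \<in> M \<longleftrightarrow> y = g x" for x y
  proof -
    obtain y' where y': "(x, y') \<in> M" using total[of x] by force
    have "(x, z) \<in> M \<longleftrightarrow> z = y'" for z
      using M y' unfolding dominated_graph_def by blast
    then show ?thesis unfolding g_def by simp
  qed
  show ?thesis
    using M unfolding dominated_graph_def graph by (intro that) auto
qed

text \<open>Complexification: the real part \<open>g\<close> determines \<open>f x = g x - i g (i x)\<close>.\<close>

lemma seminorm_norming_functional:
  obtains f where "\<And>x y. f (x + y) = f x + f y" "\<And>c x. f (sm c x) = c * f x"
    "\<And>x. cmod (f x) \<le> q x" "f v = q v"
proof -
  obtain g where g_add: "\<And>x y. g (x + y) = g x + g y"
    and g_scale: "\<And>t x. g (sm (of_real t) x) = t * g x"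
    and g_le: "\<And>x. g x \<le> q x" and g_v: "g v = q v"
    using real_dominated_functional by blast
  define f where "f x = Complex (g x) (- g (sm \<i> x))" for x
  have f_add: "f (x + y) = f x + f y" for x y
    unfolding f_def by (simp add: g_add scale_add_right complex_eq_iff)
  have g_cscale: "g (sm c x) = Re c * g x + Im c * g (sm \<i> x)" for c x
  proof -
    have "c = of_real (Re c) + of_real (Im c) * \<i>"
      by (simp add: complex_eq_iff)
    then have "sm c x = sm (of_real (Re c)) x + sm (of_real (Im c)) (sm \<i> x)"
      by (metis scale_add_left scale_scale)
    then show ?thesis by (simp add: g_add g_scale)
  qed
  have f_scale: "f (sm c x) = c * f x" for c x
  proof -
    have "g (sm \<i> (sm c x)) = - Im c * g x + Re c * g (sm \<i> x)"
      using g_cscale[of "\<i> * c" x] by (simp add: scale_scale)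
    then show ?thesis
      unfolding f_def g_cscale[of c x] by (simp add: complex_eq_iff algebra_simps)
  qed
  have f_le: "cmod (f x) \<le> q x" for x
  proof (cases "f x = 0")
    case True
    then show ?thesis using seminorm_nonneg[OF q] by simp
  next
    case False
    define u where "u = cnj (f x) / cmod (f x)"
    have "cmod u = 1" using False unfolding u_def by (simp add: norm_divide)
    have "f (sm u x) = cmod (f x)"
      using False unfolding f_scale u_def
      by (simp add: complex_norm_square[symmetric] power2_eq_square field_simps)
    then have "cmod (f x) = g (sm u x)"
      unfolding f_def by (metis complex.sel(1) Re_complex_of_real)
    also have "\<dots> \<le> q (sm u x)" by (rule g_le)
    also have "\<dots> = q x" using seminorm_scale[OF q] \<open>cmod u = 1\<close> by simp
    finally show ?thesis .
  qed
  have "f v = q v"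
  proof -
    have "Re (f v) = q v" unfolding f_def by (simp add: g_v)
    moreover have "(Re (f v))\<^sup>2 + (Im (f v))\<^sup>2 \<le> (q v)\<^sup>2"
      using power_mono[OF f_le[of v] norm_ge_zero, of 2] by (simp add: cmod_power2)
    ultimately show ?thesis by (simp add: complex_eq_iff)
  qed
  then show ?thesis using f_add f_scale f_le by (intro that)
qed

end

lemma seminorm_sum_nonneg: "\<forall>p\<in>P. seminorm_on sm p \<Longrightarrow> F \<subseteq> P \<Longrightarrow> 0 \<le> (\<Sum>p\<in>F. p x)"
  by (auto intro: sum_nonneg seminorm_nonneg)

lemma cont_snE:
  assumes P: "\<forall>p\<in>P. seminorm_on sm p" and "cont_sn sm P q"
  obtains F C where "finite F" "F \<subseteq> P" "0 \<le> C" "\<And>x. q x \<le> C * (\<Sum>p\<in>F. p x)"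
proof -
  obtain F C where F: "finite F" "F \<subseteq> P" and le: "\<And>x. q x \<le> C * (\<Sum>p\<in>F. p x)"
    using assms(2) unfolding cont_sn_def by blast
  have "q x \<le> max C 0 * (\<Sum>p\<in>F. p x)" for x
    by (rule order_trans[OF le mult_right_mono[OF max.cobounded1 seminorm_sum_nonneg[OF P F(2)]]])
  with F show ?thesis by (intro that[of F "max C 0"]) auto
qed

lemma cont_sn_member: "p \<in> P \<Longrightarrow> seminorm_on sm p \<Longrightarrow> cont_sn sm P p"
  unfolding cont_sn_def by (intro conjI exI[of _ "{p}"] exI[of _ 1]) auto

lemma cont_sn_le:
  assumes P: "\<forall>p\<in>P. seminorm_on sm p" and s: "cont_sn sm P s"
    and N: "seminorm_on sm N" and "0 \<le> K" and le: "\<And>x. N x \<le> K * s x"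
  shows "cont_sn sm P N"
proof -
  obtain F C where F: "finite F" "F \<subseteq> P" and "0 \<le> C" and s_le: "\<And>x. s x \<le> C * (\<Sum>p\<in>F. p x)"
    using cont_snE[OF P s] by blast
  have "N x \<le> (K * C) * (\<Sum>p\<in>F. p x)" for x
    using le[of x] mult_left_mono[OF s_le[of x] \<open>0 \<le> K\<close>] by (simp add: mult.assoc)
  with F N show ?thesis unfolding cont_sn_def by blast
qed

lemma cont_sn_cmult:
  assumes P: "\<forall>p\<in>P. seminorm_on sm p" and s: "cont_sn sm P s" and "0 \<le> K"
  shows "cont_sn sm P (\<lambda>x. K * s x)"
  using s assms(3) by (intro cont_sn_le[OF P s]) (auto simp: cont_sn_def seminorm_cmult)

lemma cont_sn_add:
  assumes P: "\<forall>p\<in>P. seminorm_on sm p" and a: "cont_sn sm P a" and b: "cont_sn sm P b"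
  shows "cont_sn sm P (\<lambda>x. a x + b x)"
proof -
  obtain F C where F: "finite F" "F \<subseteq> P" "0 \<le> C" and a_le: "\<And>x. a x \<le> C * (\<Sum>p\<in>F. p x)"
    using cont_snE[OF P a] by blast
  obtain G D where G: "finite G" "G \<subseteq> P" "0 \<le> D" and b_le: "\<And>x. b x \<le> D * (\<Sum>p\<in>G. p x)"
    using cont_snE[OF P b] by blast
  have "(\<Sum>p\<in>F. p x) \<le> (\<Sum>p\<in>F \<union> G. p x)" "(\<Sum>p\<in>G. p x) \<le> (\<Sum>p\<in>F \<union> G. p x)" for x
    using F G P by (auto intro!: sum_mono2 seminorm_nonneg)
  then have "a x + b x \<le> C * (\<Sum>p\<in>F \<union> G. p x) + D * (\<Sum>p\<in>F \<union> G. p x)" for x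
    using a_le[of x] b_le[of x] F(3) G(3) by (meson add_mono mult_left_mono order_trans)
  then have "a x + b x \<le> (C + D) * (\<Sum>p\<in>F \<union> G. p x)" for x
    by (simp add: distrib_right)
  moreover have "seminorm_on sm (\<lambda>x. a x + b x)"
    using a b unfolding cont_sn_def by (blast intro: seminorm_add)
  ultimately show ?thesis
    unfolding cont_sn_def using F G by (intro conjI exI[of _ "F \<union> G"]) auto
qed

lemma cont_sn_sum:
  assumes P: "\<forall>p\<in>P. seminorm_on sm p" and "finite I" and s: "\<And>i. i \<in> I \<Longrightarrow> cont_sn sm P (s i)"
  shows "cont_sn sm P (\<lambda>x. \<Sum>i\<in>I. s i x)"
  using \<open>finite I\<close> s
proof (induction I rule: finite_induct)
  case empty
  then show ?case
    unfolding cont_sn_def by (intro conjI exI[of _ "{}"] exI[of _ 0]) (simp_all add: seminorm_on_def)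
next
  case (insert i I)
  then show ?case by (simp add: cont_sn_add[OF P])
qed

lemma cont_sn_trans:
  assumes Q: "\<forall>q\<in>Q. cont_sn sm R q" and R: "\<forall>r\<in>R. seminorm_on sm r" and p: "cont_sn sm Q p"
  shows "cont_sn sm R p"
proof -
  have "\<forall>q\<in>Q. seminorm_on sm q"
    using Q unfolding cont_sn_def by blast
  then obtain F C where F: "finite F" "F \<subseteq> Q" "0 \<le> C" and le: "\<And>x. p x \<le> C * (\<Sum>q\<in>F. q x)"
    using cont_snE p by blast
  have "cont_sn sm R (\<lambda>x. \<Sum>q\<in>F. q x)"
    using F Q by (intro cont_sn_sum[OF R]) auto
  moreover have "seminorm_on sm p"
    using p unfolding cont_sn_def by blast
  ultimately show ?thesis
    using F(3) le by (rule cont_sn_le[OF R])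
qed

lemma cont_sn_singletonE:
  assumes n: "seminorm_on sm n" and "cont_sn sm {n} p"
  obtains C where "0 \<le> C" "\<And>x. p x \<le> C * n x"
proof -
  have "\<forall>q\<in>{n}. seminorm_on sm q"
    using n by simp
  then obtain F C where F: "finite F" "F \<subseteq> {n}" "0 \<le> C"
    and le: "\<And>x. p x \<le> C * (\<Sum>q\<in>F. q x)"
    using cont_snE assms(2) by blast
  have "p x \<le> C * n x" for x
  proof -
    have "(\<Sum>q\<in>F. q x) \<le> n x"
      using subset_singletonD[OF F(2)] seminorm_nonneg[OF n] by auto
    with le[of x] F(3) show ?thesis
      by (meson mult_left_mono order_trans)
  qed
  with F(3) show ?thesis by (rule that)
qed

lemma defining_family_image:
  assumes Q: "defining_family sm P Q" and P: "\<forall>p\<in>P. seminorm_on sm p"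
    and N: "\<And>q. q \<in> Q \<Longrightarrow> cont_sn sm P (N q)"
    and dom: "\<And>q. q \<in> Q \<Longrightarrow> \<exists>K\<ge>0. \<forall>x. q x \<le> K * N q x"
  shows "defining_family sm P (N ` Q)"
proof -
  have NQ: "\<forall>M\<in>N ` Q. seminorm_on sm M"
    using N unfolding cont_sn_def by auto
  have Q_NQ: "cont_sn sm (N ` Q) q" if "q \<in> Q" for q
  proof -
    from dom[OF that] obtain K where "0 \<le> K" and le: "\<And>x. q x \<le> K * N q x"
      by blast
    have "cont_sn sm (N ` Q) (N q)"
      using that NQ by (intro cont_sn_member) auto
    moreover have "seminorm_on sm q"
      using Q that unfolding defining_family_def cont_sn_def by blast
    ultimately show ?thesis
      using \<open>0 \<le> K\<close> le by (rule cont_sn_le[OF NQ])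
  qed
  have "cont_sn sm (N ` Q) p" if "p \<in> P" for p
  proof -
    have "cont_sn sm Q p"
      using Q that unfolding defining_family_def by blast
    then show ?thesis
      using Q_NQ NQ by (blast intro: cont_sn_trans)
  qed
  then show ?thesis
    using N unfolding defining_family_def by blast
qed

lemma cont_sn_tendsto_zero:
  assumes P: "\<forall>p\<in>P. seminorm_on sm p" and q: "cont_sn sm P q" and "lc_sums P u v"
  shows "(\<lambda>n. q ((\<Sum>i<n. u i) - v)) \<longlonglongrightarrow> 0"
proof -
  obtain F C where F: "finite F" "F \<subseteq> P" "0 \<le> C" and le: "\<And>x. q x \<le> C * (\<Sum>p\<in>F. p x)"
    using cont_snE[OF P q] by blast
  have "(\<lambda>n. \<Sum>p\<in>F. p ((\<Sum>i<n. u i) - v)) \<longlonglongrightarrow> (\<Sum>p\<in>F. 0)"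
    using F \<open>lc_sums P u v\<close> unfolding lc_sums_def by (intro tendsto_sum) auto
  then have lim: "(\<lambda>n. C * (\<Sum>p\<in>F. p ((\<Sum>i<n. u i) - v))) \<longlonglongrightarrow> 0"
    using tendsto_mult_right_zero by fastforce
  have "norm (q x) \<le> C * (\<Sum>p\<in>F. p x)" for x
  proof -
    have "0 \<le> q x"
      using q seminorm_nonneg unfolding cont_sn_def by blast
    then show ?thesis using le[of x] by simp
  qed
  then show ?thesis
    by (intro Lim_null_comparison[OF always_eventually lim]) blast
qed

lemma sums_additive_dominated:
  assumes P: "\<forall>p\<in>P. seminorm_on sm p" and q: "cont_sn sm P q" and "lc_sums P u v"
    and f_add: "\<And>x y. f (x + y) = f x + f y" and f_le: "\<And>x. cmod (f x) \<le> q x"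
  shows "(\<lambda>i. f (u i)) sums f v"
proof -
  interpret additive f
    using f_add by unfold_locales
  have "norm ((\<Sum>i<n. f (u i)) - f v) \<le> q ((\<Sum>i<n. u i) - v)" for n
    using f_le[of "(\<Sum>i<n. u i) - v"] by (simp add: diff sum)
  then have "(\<lambda>n. (\<Sum>i<n. f (u i)) - f v) \<longlonglongrightarrow> 0"
    by (intro Lim_null_comparison[OF always_eventually cont_sn_tendsto_zero[OF P q \<open>lc_sums P u v\<close>]])
      blast
  then show ?thesis
    unfolding sums_def by (rule LIM_zero_cancel)
qed

end

lemma cont_bilinear_bound:
  assumes "cvs smV" "cvs smW" "cvs smU"
    and PV: "\<forall>p\<in>PV. seminorm_on smV p" and PW: "\<forall>p\<in>PW. seminorm_on smW p"
    and PU: "\<forall>p\<in>PU. seminorm_on smU p"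
    and B: "cont_bilinear smV PV smW PW smU PU B" and q: "cont_sn smU PU q"
  obtains p s where "cont_sn smV PV p" "cont_sn smW PW s" "\<And>x y. q (B x y) \<le> p x * s y"
proof -
  interpret V: cvs_space smV by (rule cvs_space.intro) fact
  interpret W: cvs_space smW by (rule cvs_space.intro) fact
  interpret U: cvs_space smU by (rule cvs_space.intro) fact
  obtain F C where F: "finite F" "F \<subseteq> PU" "0 \<le> C" and q_le: "\<And>z. q z \<le> C * (\<Sum>r\<in>F. r z)"
    using U.cont_snE[OF PU q] by blast
  obtain pr sr where r: "\<And>r. r \<in> PU \<Longrightarrow> cont_sn smV PV (pr r) \<and> cont_sn smW PW (sr r) \<and>
      (\<forall>x y. r (B x y) \<le> pr r x * sr r y)"
    using B unfolding cont_bilinear_def by metis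
  define p where "p x = C * (\<Sum>r\<in>F. pr r x)" for x
  define s where "s y = (\<Sum>r\<in>F. sr r y)" for y
  have "cont_sn smV PV p"
    unfolding p_def using F r by (intro V.cont_sn_cmult[OF PV] V.cont_sn_sum[OF PV]) auto
  moreover have "cont_sn smW PW s"
    unfolding s_def using F r by (intro W.cont_sn_sum[OF PW]) auto
  moreover have "q (B x y) \<le> p x * s y" for x y
  proof -
    have pr_nonneg: "0 \<le> pr r x" and sr_le: "sr r y \<le> s y" if "r \<in> F" for r
      using that F r V.seminorm_nonneg W.seminorm_nonneg unfolding s_def cont_sn_def
      by (auto intro!: member_le_sum)
    have "q (B x y) \<le> C * (\<Sum>r\<in>F. pr r x * sr r y)"
      using F r by (intro order_trans[OF q_le] mult_left_mono sum_mono) auto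
    also have "\<dots> \<le> C * (\<Sum>r\<in>F. pr r x * s y)"
      using F pr_nonneg sr_le by (intro mult_left_mono sum_mono mult_left_mono) auto
    also have "\<dots> = p x * s y"
      unfolding p_def by (simp add: sum_distrib_right)
    finally show ?thesis .
  qed
  ultimately show ?thesis by (rule that)
qed

lemma tpair_norm_le:
  assumes "ptensor_rep n r" and "0 \<le> K" and \<phi>: "\<And>x y. cmod (\<phi> x y) \<le> K * n x * n y"
  shows "cmod (tpair \<phi> r) \<le> K * (\<Sum>i. n (fst (r i)) * n (snd (r i)))"
proof -
  have sum: "summable (\<lambda>i. n (fst (r i)) * n (snd (r i)))"
    using assms(1) unfolding ptensor_rep_def .
  have le: "norm (\<phi> (fst (r i)) (snd (r i))) \<le> K * (n (fst (r i)) * n (snd (r i)))" for i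
    using \<phi> by (simp add: mult.assoc)
  have sum_K: "summable (\<lambda>i. K * (n (fst (r i)) * n (snd (r i))))"
    using summable_mult[OF sum] .
  then have "summable (\<lambda>i. norm (\<phi> (fst (r i)) (snd (r i))))"
    by (rule summable_comparison_test'[where N = 0]) (simp add: le)
  then have "cmod (tpair \<phi> r) \<le> (\<Sum>i. K * (n (fst (r i)) * n (snd (r i))))"
    unfolding tpair_def using sum_K le by (intro order_trans[OF summable_norm] suminf_le) auto
  also have "\<dots> = K * (\<Sum>i. n (fst (r i)) * n (snd (r i)))"
    by (rule suminf_mult[OF sum])
  finally show ?thesis .
qed

locale bialgebra_module_algebra =
  fixes smH :: "complex \<Rightarrow> 'h::ring_1 \<Rightarrow> 'h" and nH :: "'h \<Rightarrow> real"
    and \<Delta> :: "'h \<Rightarrow> nat \<Rightarrow> 'h \<times> 'h" and \<epsilon> :: "'h \<Rightarrow> complex"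
    and smA :: "complex \<Rightarrow> 'a::ring_1 \<Rightarrow> 'a" and P :: "('a \<Rightarrow> real) set"
    and act :: "'h \<Rightarrow> 'a \<Rightarrow> 'a"
  assumes bialgebra: "banach_bialgebra smH nH \<Delta> \<epsilon>"
    and am: "am_algebra smA P"
    and module: "module_algebra smH nH \<Delta> \<epsilon> smA P act"
begin

lemma banach_algebra: "banach_algebra smH nH"
  using bialgebra unfolding banach_bialgebra_def by blast

sublocale H: cvs_space smH
  using banach_algebra unfolding banach_algebra_def calg_def by unfold_locales blast

sublocale A: cvs_space smA
  using am unfolding am_algebra_def calg_def by unfold_locales blast

lemma seminorm_nH: "seminorm_on smH nH"
  using banach_algebra unfolding banach_algebra_def by blast

lemma nH_nonneg: "0 \<le> nH h"
  by (rule H.seminorm_nonneg[OF seminorm_nH])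

lemma nH_pos: "h \<noteq> 0 \<Longrightarrow> 0 < nH h"
  using banach_algebra nH_nonneg[of h] unfolding banach_algebra_def by force

lemma nH_mult_bound: "\<exists>C\<ge>0. \<forall>x y. nH (x * y) \<le> C * nH x * nH y"
proof -
  obtain C where C: "\<And>x y. nH (x * y) \<le> C * nH x * nH y"
    using banach_algebra unfolding banach_algebra_def by blast
  have "nH (x * y) \<le> max C 0 * nH x * nH y" for x y
    using C[of x y] mult_right_mono[OF max.cobounded1 mult_nonneg_nonneg[OF nH_nonneg nH_nonneg]]
    by (simp add: mult.assoc) (meson order_trans)
  then show ?thesis by (intro exI[of _ "max C 0"]) auto
qed

lemma comultiplication_bound:
  obtains C where "1 \<le> C" "\<And>h. \<exists>r. ptensor_rep nH r \<and> teq smH nH r (\<Delta> h) \<and>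
      (\<Sum>i. nH (fst (r i)) * nH (snd (r i))) \<le> C * nH h"
proof -
  have "\<exists>C. \<forall>h. \<exists>r. ptensor_rep nH r \<and> teq smH nH r (\<Delta> h) \<and>
      (\<Sum>i. nH (fst (r i)) * nH (snd (r i))) \<le> C * nH h"
    using bialgebra unfolding banach_bialgebra_def by blast
  then obtain C where C: "\<And>h. \<exists>r. ptensor_rep nH r \<and> teq smH nH r (\<Delta> h) \<and>
      (\<Sum>i. nH (fst (r i)) * nH (snd (r i))) \<le> C * nH h"
    by blast
  have "\<exists>r. ptensor_rep nH r \<and> teq smH nH r (\<Delta> h) \<and>
      (\<Sum>i. nH (fst (r i)) * nH (snd (r i))) \<le> max C 1 * nH h" for h
    using C[of h] mult_right_mono[OF max.cobounded1 nH_nonneg, of C h 1] by (meson order_trans)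
  then show ?thesis by (rule that[OF max.cobounded2])
qed

lemma seminorms_P: "\<forall>p\<in>P. seminorm_on smA p"
  using am unfolding am_algebra_def by blast

lemma scale_mult_left: "smA c (x * y) = smA c x * y"
  using am unfolding am_algebra_def calg_def by blast

lemma scale_mult_right: "smA c (x * y) = x * smA c y"
  using am unfolding am_algebra_def calg_def by blast

lemma act_cont_bilinear: "cont_bilinear smH {nH} smA P smA P act"
  using module unfolding module_algebra_def by blast

lemma act_add_left: "act (h + h') a = act h a + act h' a"
  using act_cont_bilinear unfolding cont_bilinear_def by blast

lemma act_add_right: "act h (a + b) = act h a + act h b"
  using act_cont_bilinear unfolding cont_bilinear_def by blast

lemma act_scale_left: "act (smH c h) a = smA c (act h a)"
  using act_cont_bilinear unfolding cont_bilinear_def by blast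

lemma act_scale_right: "act h (smA c a) = smA c (act h a)"
  using act_cont_bilinear unfolding cont_bilinear_def by blast

lemma act_zero_left: "act 0 a = 0"
  using act_add_left[of 0 0 a] by simp

lemma act_mult: "act (h * k) a = act h (act k a)"
  using module unfolding module_algebra_def by blast

lemma act_one: "act 1 a = a"
  using module unfolding module_algebra_def by blast

lemma act_sums: "lc_sums P (\<lambda>i. act (fst (\<Delta> h i)) a * act (snd (\<Delta> h i)) b) (act h (a * b))"
  using module unfolding module_algebra_def by blast

lemma act_bound:
  assumes "cont_sn smA P q"
  obtains K s where "0 \<le> K" "cont_sn smA P s" "\<And>h a. q (act h a) \<le> K * nH h * s a"
proof -
  have "\<forall>p\<in>{nH}. seminorm_on smH p"
    using seminorm_nH by simp
  then obtain p s where p: "cont_sn smH {nH} p" and "cont_sn smA P s"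
    and le: "\<And>h a. q (act h a) \<le> p h * s a"
    using cont_bilinear_bound[OF H.cvs A.cvs A.cvs _ seminorms_P seminorms_P act_cont_bilinear assms]
    by blast
  obtain K where "0 \<le> K" and p_le: "\<And>h. p h \<le> K * nH h"
    using H.cont_sn_singletonE[OF seminorm_nH p] by blast
  have "q (act h a) \<le> K * nH h * s a" for h a
    using le[of h a] mult_right_mono[OF p_le A.seminorm_nonneg[of s a]] \<open>cont_sn smA P s\<close>
    unfolding cont_sn_def by (meson order_trans)
  with \<open>0 \<le> K\<close> \<open>cont_sn smA P s\<close> show ?thesis by (rule that)
qed

subsection \<open>The stabilization of a seminorm\<close>

definition act_sup :: "('a \<Rightarrow> real) \<Rightarrow> 'a \<Rightarrow> real" where
  "act_sup q a = (SUP k\<in>{k. k \<noteq> 0}. q (act k a) / nH k)"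

lemma act_sup_least:
  assumes "\<And>k. k \<noteq> 0 \<Longrightarrow> q (act k a) \<le> nH k * B"
  shows "act_sup q a \<le> B"
  unfolding act_sup_def
proof (rule cSUP_least)
  have "(1::'h) \<in> {k. k \<noteq> 0}" by simp
  then show "{k::'h. k \<noteq> 0} \<noteq> {}" by blast
  show "q (act k a) / nH k \<le> B" if "k \<in> {k. k \<noteq> 0}" for k
  proof -
    have "0 < nH k" using that nH_pos by simp
    with assms[of k] that show ?thesis by (simp add: divide_le_eq mult.commute)
  qed
qed

context
  fixes q :: "'a \<Rightarrow> real"
  assumes q: "cont_sn smA P q"
begin

lemma seminorm_q: "seminorm_on smA q"
  using q unfolding cont_sn_def by blast

lemma act_sup_dominated:
  obtains K s where "0 \<le> K" "cont_sn smA P s" "\<And>a. act_sup q a \<le> K * s a"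
proof -
  obtain K s where K: "0 \<le> K" and s: "cont_sn smA P s"
    and le: "\<And>h a. q (act h a) \<le> K * nH h * s a"
    using act_bound[OF q] by blast
  have "act_sup q a \<le> K * s a" for a
    using le by (intro act_sup_least) (simp add: algebra_simps)
  with K s show ?thesis by (rule that)
qed

lemma act_le_act_sup: "q (act k a) \<le> nH k * act_sup q a"
proof (cases "k = 0")
  case True
  then show ?thesis
    using A.seminorm_zero[OF seminorm_q] H.seminorm_zero[OF seminorm_nH]
    by (simp add: act_zero_left)
next
  case False
  obtain K s where "0 \<le> K" "cont_sn smA P s" and le: "\<And>h a. q (act h a) \<le> K * nH h * s a"
    using act_bound[OF q] by blast
  have "q (act j a) / nH j \<le> K * s a" if "j \<noteq> 0" for j
    using le[of j a] nH_pos[OF that] by (simp add: divide_le_eq mult.commute mult.left_commute)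
  then have "bdd_above ((\<lambda>k. q (act k a) / nH k) ` {k. k \<noteq> 0})"
    unfolding bdd_above_def by blast
  then have "q (act k a) / nH k \<le> act_sup q a"
    unfolding act_sup_def using False by (intro cSUP_upper) auto
  then show ?thesis
    using nH_pos[OF False] by (simp add: divide_le_eq mult.commute)
qed

lemma act_sup_nonneg: "0 \<le> act_sup q a"
proof -
  have "0 \<le> nH 1 * act_sup q a"
    using act_le_act_sup[of 1 a] A.seminorm_nonneg[OF seminorm_q, of "act 1 a"] by linarith
  then show ?thesis
    using nH_pos[of 1] by (simp add: zero_le_mult_iff)
qed

lemma le_act_sup: "q a \<le> nH 1 * act_sup q a"
  using act_le_act_sup[of 1 a] by (simp add: act_one)

lemma seminorm_act_sup: "seminorm_on smA (act_sup q)"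
  unfolding seminorm_on_def
proof (intro conjI allI)
  show "act_sup q (x + y) \<le> act_sup q x + act_sup q y" for x y
  proof (rule act_sup_least)
    fix k :: 'h
    have "q (act k (x + y)) \<le> q (act k x) + q (act k y)"
      by (simp add: act_add_right A.seminorm_triangle[OF seminorm_q])
    also have "\<dots> \<le> nH k * (act_sup q x + act_sup q y)"
      using act_le_act_sup[of k x] act_le_act_sup[of k y] by (simp add: distrib_left)
    finally show "q (act k (x + y)) \<le> nH k * (act_sup q x + act_sup q y)" .
  qed
  have le: "act_sup q (smA c x) \<le> cmod c * act_sup q x" for c x
    by (rule act_sup_least)
      (simp add: act_scale_right A.seminorm_scale[OF seminorm_q] act_le_act_sup mult.left_commute
        mult_left_mono)
  show "act_sup q (smA c x) = cmod c * act_sup q x" for c x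
  proof (cases "c = 0")
    case True
    then show ?thesis using le[of c x] act_sup_nonneg[of "smA c x"] by simp
  next
    case False
    have "act_sup q x \<le> cmod (inverse c) * act_sup q (smA c x)"
      using le[of "inverse c" "smA c x"] False by (simp add: A.scale_scale)
    then have "cmod c * act_sup q x \<le> cmod c * (cmod (inverse c) * act_sup q (smA c x))"
      by (rule mult_left_mono) simp
    also have "\<dots> = act_sup q (smA c x)"
      using False by (simp add: norm_inverse)
    finally have "cmod c * act_sup q x \<le> act_sup q (smA c x)" .
    with le[of c x] show ?thesis by linarith
  qed
qed

lemma cont_sn_act_sup: "cont_sn smA P (act_sup q)"
proof -
  obtain K s where "0 \<le> K" "cont_sn smA P s" "\<And>a. act_sup q a \<le> K * s a"
    using act_sup_dominated by blast
  then show ?thesis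
    by (intro A.cont_sn_le[OF seminorms_P _ seminorm_act_sup]) auto
qed

lemma act_sup_act:
  assumes "0 \<le> C" and C: "\<And>x y. nH (x * y) \<le> C * nH x * nH y"
  shows "act_sup q (act h a) \<le> C * nH h * act_sup q a"
proof (rule act_sup_least)
  fix k :: 'h
  have "q (act k (act h a)) \<le> nH (k * h) * act_sup q a"
    using act_le_act_sup[of "k * h" a] by (simp add: act_mult)
  also have "\<dots> \<le> C * nH k * nH h * act_sup q a"
    using C act_sup_nonneg by (intro mult_right_mono) auto
  finally show "q (act k (act h a)) \<le> nH k * (C * nH h * act_sup q a)"
    by (simp add: algebra_simps)
qed

context
  fixes f :: "'a \<Rightarrow> complex"
  assumes f_add: "\<And>x y. f (x + y) = f x + f y" and f_scale: "\<And>c x. f (smA c x) = c * f x"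
    and f_le: "\<And>x. cmod (f x) \<le> q x"
begin

lemma tpair_comultiplication_act:
  "tpair (\<lambda>x y. f (act x a * act y b)) (\<Delta> k) = f (act k (a * b))"
proof -
  have "(\<lambda>i. f (act (fst (\<Delta> k i)) a * act (snd (\<Delta> k i)) b)) sums f (act k (a * b))"
    by (rule A.sums_additive_dominated[where f = f, OF seminorms_P q act_sums f_add f_le])
  then show ?thesis
    unfolding tpair_def by (rule sums_unique[symmetric])
qed

lemma bounded_bilinear_form_act_pair:
  assumes q_mult: "\<And>a b. q (a * b) \<le> q a * q b"
  shows "bounded_bilinear_form smH nH (\<lambda>x y. f (act x a * act y b))"
    and "cmod (f (act x a * act y b)) \<le> act_sup q a * act_sup q b * nH x * nH y"
proof -
  show le: "cmod (f (act x a * act y b)) \<le> act_sup q a * act_sup q b * nH x * nH y" for x y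
  proof -
    have "cmod (f (act x a * act y b)) \<le> q (act x a) * q (act y b)"
      by (rule order_trans[OF f_le q_mult])
    also have "\<dots> \<le> (nH x * act_sup q a) * (nH y * act_sup q b)"
      by (rule mult_mono[OF act_le_act_sup act_le_act_sup
            mult_nonneg_nonneg[OF nH_nonneg act_sup_nonneg] A.seminorm_nonneg[OF seminorm_q]])
    finally show ?thesis by (simp add: algebra_simps)
  qed
  then show "bounded_bilinear_form smH nH (\<lambda>x y. f (act x a * act y b))"
    unfolding bounded_bilinear_form_def
  proof (intro conjI allI)
    show "f (act (x + x') a * act y b) = f (act x a * act y b) + f (act x' a * act y b)" for x x' y
      by (simp add: act_add_left distrib_right f_add)
    show "f (act x a * act (y + y') b) = f (act x a * act y b) + f (act x a * act y' b)" for x y y'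
      by (simp add: act_add_left distrib_left f_add)
    show "f (act (smH c x) a * act y b) = c * f (act x a * act y b)" for c x y
      by (simp add: act_scale_left scale_mult_left[symmetric] f_scale)
    show "f (act x a * act (smH c y) b) = c * f (act x a * act y b)" for c x y
      by (simp add: act_scale_left scale_mult_right[symmetric] f_scale)
  qed (intro exI allI, rule le)
qed

end

text \<open>\<open>k \<cdot> ab\<close> is estimated through a norming functional at \<open>k \<cdot> ab\<close>, which turns it into the
  pairing of \<open>\<Delta> k\<close> with a bounded bilinear form; that pairing only depends on the element
  of \<open>H \<otimes> H\<close>, so it may be computed on a representative of projective norm \<open>\<le> C nH k\<close>.\<close>

lemma act_mult_le:
  assumes q_mult: "\<And>a b. q (a * b) \<le> q a * q b"
    and \<Delta>_bound: "\<And>h. \<exists>r. ptensor_rep nH r \<and> teq smH nH r (\<Delta> h) \<and>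
        (\<Sum>i. nH (fst (r i)) * nH (snd (r i))) \<le> C * nH h"
  shows "q (act k (a * b)) \<le> nH k * (C * act_sup q a * act_sup q b)"
proof -
  obtain f where f_add: "\<And>x y. f (x + y) = f x + f y" and f_scale: "\<And>c x. f (smA c x) = c * f x"
    and f_le: "\<And>x. cmod (f x) \<le> q x" and f_norming: "f (act k (a * b)) = q (act k (a * b))"
    using A.seminorm_norming_functional[OF seminorm_q] by blast
  let ?\<phi> = "\<lambda>x y. f (act x a * act y b)"
  let ?K = "act_sup q a * act_sup q b"
  obtain r where r: "ptensor_rep nH r" "teq smH nH r (\<Delta> k)"
    and r_le: "(\<Sum>i. nH (fst (r i)) * nH (snd (r i))) \<le> C * nH k"
    using \<Delta>_bound by blast
  have "bounded_bilinear_form smH nH ?\<phi>"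
    by (rule bounded_bilinear_form_act_pair(1)[where f = f, OF f_add f_scale f_le q_mult])
  then have "tpair ?\<phi> r = tpair ?\<phi> (\<Delta> k)"
    using r(2) unfolding teq_def by blast
  also have "\<dots> = q (act k (a * b))"
    using f_norming by (simp only: tpair_comultiplication_act[where f = f, OF f_add f_scale f_le])
  finally have "q (act k (a * b)) = cmod (tpair ?\<phi> r)"
    using A.seminorm_nonneg[OF seminorm_q] by simp
  also have "\<dots> \<le> ?K * (\<Sum>i. nH (fst (r i)) * nH (snd (r i)))"
    using r(1) mult_nonneg_nonneg[OF act_sup_nonneg act_sup_nonneg]
      bounded_bilinear_form_act_pair(2)[where f = f, OF f_add f_scale f_le q_mult]
    by (rule tpair_norm_le)
  also have "\<dots> \<le> ?K * (C * nH k)"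
    using r_le mult_nonneg_nonneg[OF act_sup_nonneg act_sup_nonneg] by (rule mult_left_mono)
  finally show ?thesis
    by (simp add: algebra_simps)
qed

lemma act_sup_mult_le:
  assumes "\<And>a b. q (a * b) \<le> q a * q b"
    and "\<And>h. \<exists>r. ptensor_rep nH r \<and> teq smH nH r (\<Delta> h) \<and>
        (\<Sum>i. nH (fst (r i)) * nH (snd (r i))) \<le> C * nH h"
  shows "act_sup q (a * b) \<le> C * act_sup q a * act_sup q b"
  by (intro act_sup_least act_mult_le[OF assms])

lemma scaled_act_sup_H_stable:
  assumes "0 \<le> D"
  shows "\<exists>p. cont_sn smH {nH} p \<and> (\<forall>h a. D * act_sup q (act h a) \<le> p h * (D * act_sup q a))"
proof -
  obtain C where "0 \<le> C" and C: "\<And>x y. nH (x * y) \<le> C * nH x * nH y"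
    using nH_mult_bound by blast
  have "cont_sn smH {nH} (\<lambda>h. C * nH h)"
    using seminorm_nH \<open>0 \<le> C\<close> by (intro H.cont_sn_cmult H.cont_sn_member) auto
  moreover have "D * act_sup q (act h a) \<le> C * nH h * (D * act_sup q a)" for h a
    using mult_left_mono[OF act_sup_act[OF \<open>0 \<le> C\<close> C] \<open>0 \<le> D\<close>] by (simp add: algebra_simps)
  ultimately show ?thesis by blast
qed

lemma scaled_act_sup_mult_le:
  assumes "\<And>a b. q (a * b) \<le> q a * q b" and "0 \<le> C"
    and "\<And>h. \<exists>r. ptensor_rep nH r \<and> teq smH nH r (\<Delta> h) \<and>
        (\<Sum>i. nH (fst (r i)) * nH (snd (r i))) \<le> C * nH h"
  shows "C * act_sup q (a * b) \<le> (C * act_sup q a) * (C * act_sup q b)"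
  using mult_left_mono[OF act_sup_mult_le[OF assms(1,3)] \<open>0 \<le> C\<close>] by (simp add: algebra_simps)

end

end

theorem proposition5p11:
  fixes smH :: "complex \<Rightarrow> 'h::ring_1 \<Rightarrow> 'h" and nH :: "'h \<Rightarrow> real"
    and \<Delta> :: "'h \<Rightarrow> nat \<Rightarrow> 'h \<times> 'h" and \<epsilon> :: "'h \<Rightarrow> complex"
    and smA :: "complex \<Rightarrow> 'a::ring_1 \<Rightarrow> 'a" and P :: "('a \<Rightarrow> real) set"
    and act :: "'h \<Rightarrow> 'a \<Rightarrow> 'a"
  assumes "banach_bialgebra smH nH \<Delta> \<epsilon>"
    and "am_algebra smA P"
    and "module_algebra smH nH \<Delta> \<epsilon> smA P act"
  shows "\<exists>Q. defining_family smA P Q \<and>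
           (\<forall>q\<in>Q. (\<forall>a b. q (a * b) \<le> q a * q b) \<and>
                  (\<exists>p. cont_sn smH {nH} p \<and> (\<forall>h a. q (act h a) \<le> p h * q a)))"
proof -
  interpret bialgebra_module_algebra smH nH \<Delta> \<epsilon> smA P act
    using assms by unfold_locales
  obtain Q0 where Q0: "defining_family smA P Q0" and Q0_mult: "\<forall>q\<in>Q0. \<forall>a b. q (a * b) \<le> q a * q b"
    using assms(2) unfolding am_algebra_def by blast
  have Q0_cont: "\<And>q. q \<in> Q0 \<Longrightarrow> cont_sn smA P q"
    using Q0 unfolding defining_family_def by blast
  obtain C where "1 \<le> C" and \<Delta>_bound: "\<And>h. \<exists>r. ptensor_rep nH r \<and> teq smH nH r (\<Delta> h) \<and>
      (\<Sum>i. nH (fst (r i)) * nH (snd (r i))) \<le> C * nH h"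
    using comultiplication_bound by blast
  then have "0 \<le> C" by simp
  let ?N = "\<lambda>q a. C * act_sup q a"
  have "defining_family smA P (?N ` Q0)"
  proof (rule A.defining_family_image[OF Q0 seminorms_P])
    show "cont_sn smA P (?N q)" if "q \<in> Q0" for q
      using Q0_cont[OF that] \<open>1 \<le> C\<close> by (intro A.cont_sn_cmult[OF seminorms_P] cont_sn_act_sup) auto
    show "\<exists>K\<ge>0. \<forall>x. q x \<le> K * ?N q x" if "q \<in> Q0" for q
      using le_act_sup[OF Q0_cont[OF that]] nH_nonneg[of 1] \<open>1 \<le> C\<close>
      by (intro exI[of _ "nH 1 / C"]) auto
  qed
  moreover have "(\<forall>a b. ?N q (a * b) \<le> ?N q a * ?N q b) \<and>
      (\<exists>p. cont_sn smH {nH} p \<and> (\<forall>h a. ?N q (act h a) \<le> p h * ?N q a))" if "q \<in> Q0" for q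
    using scaled_act_sup_mult_le[OF Q0_cont[OF that] _ \<open>0 \<le> C\<close> \<Delta>_bound] Q0_mult that
      scaled_act_sup_H_stable[OF Q0_cont[OF that] \<open>0 \<le> C\<close>] by blast
  ultimately show ?thesis by blast
qed

end
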